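(* In the calculus $\mathcal{L}$ described in the context, a well-typed command $c$ (i.e. $c:A$ for some type $A$) reduces (there is $c'$ with $c\rightsquigarrow c'$) if and only if $c$ is not of the form $\langle v_t\mid\star\mid l\rangle^\varepsilon$ with $v_t$ a final value. The same holds in the ordered fragment, i.e. when all judgements $\vdash_p$ are required to be derived without the rule (struct).
   Context: Polarities are $\varepsilon\in\{+,-\}$. Types: positive $P,Q ::= R \mid 1 \mid A\otimes B \mid A\oplus B$; negative $N,M ::= A\multimap B \mid A\,\&\,B$; $\varpi(P)=+$, $\varpi(N)=-$ ($R$ is an atomic type of resources). Fix variables and resource constants $r_n$ ($n\in\mathbb N$). Expressions $t,u$ and values $v,w$: $t,u ::= v \mid (\mathrm{let}\ x^+=t\ \mathrm{in}\ u)^+ \mid (\mathrm{let}\ x^-=v\ \mathrm{in}\ u)^+ \mid \delta(v,(x,y).t)^+ \mid \delta(v,().t)^+ \mid \delta(v,x.t,y.u)^+ \mid (v\,w)^+ \mid (\pi_1 v)^+ \mid (\pi_2 v)^+$; $v,w ::= (\mathrm{let}\ x^+=t\ \mathrm{in}\ v)^- \mid (\mathrm{let}\ x^-=v\ \mathrm{in}\ w)^- \mid \delta(v,(x,y).w)^- \mid \delta(v,().w)^- \mid \delta(v,x.w,y.w')^- \mid (v\,w)^- \mid (\pi_1 v)^- \mid (\pi_2 v)^- \mid x \mid \mathrm{new} \mid \mathrm{delete} \mid (v,w) \mid () \mid \iota_1 v \mid \iota_2 v \mid \lambda x.t \mid \langle t,u\rangle \mid r_n$. Final values are $v_t ::=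 () \mid (v,w)\mid \iota_i v\mid r_n\mid\langle t,u\rangle\mid\lambda x.t\mid\mathrm{new}\mid\mathrm{delete}$. $t[v/x]$ is capture-avoiding substitution. Contexts are finite lists of typed variables. Typing rules ($v,w$ range over values): (var) $x:A\vdash x:A$. (struct) from $\Gamma\vdash t:A$ and a type-preserving bijection $\sigma$ from entries of $\Gamma$ to entries of $\Gamma'$ (permutation plus renaming) derive $\Gamma'\vdash t[\sigma]:A$. $\vdash\mathrm{new}:1\multimap(R\oplus 1)$; $\vdash\mathrm{delete}:R\multimap 1$. (let) from $\Delta\vdash t:A$, $\Gamma,x:A\vdash u:B$ derive $\Gamma,\Delta\vdash(\mathrm{let}\ x^{\varpi(A)}=t\ \mathrm{in}\ u)^{\varpi(B)}:B$. From $\Gamma\vdash v:A$, $\Delta\vdash w:B$ derive $\Gamma,\Delta\vdash(v,w):A\otimes B$; from $\Delta\vdash v:A\otimes B$, $\Gamma,x:A,y:B,\Gamma'\vdash t:C$ derive $\Gamma,\Delta,\Gamma'\vdash\delta(v,(x,y).t)^{\varpi(C)}:C$. $\vdash():1$; from $\Delta\vdash v:1$, $\Gamma,\Gamma'\vdash t:A$ derive $\Gamma,\Delta,\Gamma'\vdash\delta(v,().t)^{\varpi(A)}:A$. From $\Gamma\vdash v:A$ derive $\Gamma\vdash\iota_1v:A\oplus B$; from $\Gamma\vdash v:B$ derive $\Gamma\vdash\iota_2v:A\oplus B$; from $\Delta\vdash v:A\oplus B$, $\Gamma,x:A,\Gamma'\vdash t:C$, $\Gamma,y:B,\Gamma'\vdash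 u:C$ derive $\Gamma,\Delta,\Gamma'\vdash\delta(v,x.t,y.u)^{\varpi(C)}:C$. From $x:A,\Gamma\vdash t:B$ derive $\Gamma\vdash\lambda x.t:A\multimap B$; from $\Gamma\vdash w:A$, $\Delta\vdash v:A\multimap B$ derive $\Gamma,\Delta\vdash(v\,w)^{\varpi(B)}:B$. From $\Gamma\vdash t:A$, $\Gamma\vdash u:B$ derive $\Gamma\vdash\langle t,u\rangle:A\&B$; from $\Gamma\vdash v:A_1\&A_2$ derive $\Gamma\vdash(\pi_iv)^{\varpi(A_i)}:A_i$. $\vdash_p$ is generated by these rules plus the axioms $\vdash_p r_n:R$. Machine: stacks $s ::= \star \mid v^\varepsilon\cdot s \mid \pi_i^\varepsilon\cdot s \mid (x^+.u)^\varepsilon\cdot s$; lists $l ::= []\mid r_n::l$; commands $\langle t\mid s\mid l\rangle^\varepsilon$. Stack typing $s:A\vdash_p C$: $\star:A\vdash_p A$; if $s:B\vdash_p C$, $\varepsilon=\varpi(B)$ and $\vdash_p v:A$ then $v^\varepsilon\cdot s:A\multimap B\vdash_p C$; if $s:B\vdash_p C$, $\varepsilon=\varpi(B)$ and $x:A\vdash_p t:B$ then $(x^+.t)^\varepsilon\cdot s:A\vdash_p C$; if $s:A_i\vdash_p C$ and $\varepsilon=\varpi(A_i)$ then $\pi_i^\varepsilon\cdot s:A_1\&A_2\vdash_p C$. A command is typed, $\langle t\mid s\mid l\rangle^\varepsilon:A$, iff there is $B$ with $\varpi(B)=\varepsilon$, $\vdash_p t:B$ and $s:B\vdash_p A$.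 Reduction $\rightsquigarrow$ ($i\in\{1,2\}$): $\langle(\mathrm{let}\ x^-=v\ \mathrm{in}\ t)^\varepsilon\mid s\mid l\rangle^\varepsilon\rightsquigarrow\langle t[v/x]\mid s\mid l\rangle^\varepsilon$; $\langle(\mathrm{let}\ x^+=t\ \mathrm{in}\ u)^\varepsilon\mid s\mid l\rangle^\varepsilon\rightsquigarrow\langle t\mid (x^+.u)^\varepsilon\cdot s\mid l\rangle^+$; $\langle v\mid (x^+.t)^\varepsilon\cdot s\mid l\rangle^+\rightsquigarrow\langle t[v/x]\mid s\mid l\rangle^\varepsilon$; $\langle (v\,w)^\varepsilon\mid s\mid l\rangle^\varepsilon\rightsquigarrow\langle v\mid w^\varepsilon\cdot s\mid l\rangle^-$; $\langle \lambda x.t\mid v^\varepsilon\cdot s\mid l\rangle^-\rightsquigarrow\langle t[v/x]\mid s\mid l\rangle^\varepsilon$; $\langle (\pi_i v)^\varepsilon\mid s\mid l\rangle^\varepsilon\rightsquigarrow\langle v\mid \pi_i^\varepsilon\cdot s\mid l\rangle^-$; $\langle \langle t_1,t_2\rangle\mid \pi_i^\varepsilon\cdot s\mid l\rangle^-\rightsquigarrow\langle t_i\mid s\mid l\rangle^\varepsilon$; $\langle \delta((v,w),(x,y).t)^\varepsilon\mid s\mid l\rangle^\varepsilon\rightsquigarrow\langle t[v/x,w/y]\mid s\mid l\rangle^\varepsilon$; $\langle \delta((),().t)^\varepsilon\mid s\mid l\rangle^\varepsilon\rightsquigarrow\langle t\mid s\mid l\rangle^\varepsilon$; $\langle \delta(\iota_i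 v,x_1.t_1,x_2.t_2)^\varepsilon\mid s\mid l\rangle^\varepsilon\rightsquigarrow\langle t_i[v/x_i]\mid s\mid l\rangle^\varepsilon$; $\langle \mathrm{new}\mid ()^{\varepsilon}\cdot s\mid r_n::l\rangle^-\rightsquigarrow\langle \iota_1 r_n\mid s\mid l\rangle^+$; $\langle \mathrm{new}\mid ()^{\varepsilon}\cdot s\mid []\rangle^-\rightsquigarrow\langle \iota_2 ()\mid s\mid []\rangle^+$; $\langle \mathrm{delete}\mid r_n^{\varepsilon}\cdot s\mid l\rangle^-\rightsquigarrow\langle ()\mid s\mid r_n::l\rangle^+$. *)

theory Defs
  imports Main "HOL-Library.Multiset"
begin

datatype pol = Pos | Neg

datatype ty = R | One | Tensor ty ty | Plus ty ty | Lolli ty ty | With ty ty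

fun pol_of :: "ty \<Rightarrow> pol" where
  "pol_of R = Pos" | "pol_of One = Pos" | "pol_of (Tensor A B) = Pos" | "pol_of (Plus A B) = Pos"
| "pol_of (Lolli A B) = Neg" | "pol_of (With A B) = Neg"

type_synonym name = nat

text \<open>Polarity annotations are explicit; whether a term is an
 expression or a value is given by the grammar predicates below.
 Let p x t u e   is  (let x^p = t in u)^e ;
 DelPair v x y t e  is  delta(v,(x,y).t)^e ;  DelUnit v t e is delta(v,().t)^e ;
 DelSum v x t y u e  is  delta(v,x.t,y.u)^e ;  App v w e is (v w)^e ;
 Proj1 v e / Proj2 v e  are (pi_1 v)^e / (pi_2 v)^e ;  WPair t u is the
 additive pair; Res n is the resource constant r_n.\<close>

datatype tm =
  Var name | New | Delete | Unit | Res nat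
| Pair tm tm | Inj1 tm | Inj2 tm | Lam name tm | WPair tm tm
| Let pol name tm tm pol
| DelPair tm name name tm pol
| DelUnit tm tm pol
| DelSum tm name tm name tm pol
| App tm tm pol
| Proj1 tm pol | Proj2 tm pol

inductive is_val :: "tm \<Rightarrow> bool" and is_exp :: "tm \<Rightarrow> bool" where
  "is_val (Var x)" | "is_val New" | "is_val Delete" | "is_val Unit" | "is_val (Res n)"
| "is_val v \<Longrightarrow> is_val w \<Longrightarrow> is_val (Pair v w)"
| "is_val v \<Longrightarrow> is_val (Inj1 v)"
| "is_val v \<Longrightarrow> is_val (Inj2 v)"
| "is_exp t \<Longrightarrow> is_val (Lam x t)"
| "is_exp t \<Longrightarrow> is_exp u \<Longrightarrow> is_val (WPair t u)"
| "is_exp t \<Longrightarrow> is_val v \<Longrightarrow> is_val (Let Pos x t v Neg)"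
| "is_val v \<Longrightarrow> is_val w \<Longrightarrow> is_val (Let Neg x v w Neg)"
| "is_val v \<Longrightarrow> is_val w \<Longrightarrow> is_val (DelPair v x y w Neg)"
| "is_val v \<Longrightarrow> is_val w \<Longrightarrow> is_val (DelUnit v w Neg)"
| "is_val v \<Longrightarrow> is_val w \<Longrightarrow> is_val w' \<Longrightarrow> is_val (DelSum v x w y w' Neg)"
| "is_val v \<Longrightarrow> is_val w \<Longrightarrow> is_val (App v w Neg)"
| "is_val v \<Longrightarrow> is_val (Proj1 v Neg)"
| "is_val v \<Longrightarrow> is_val (Proj2 v Neg)"
| "is_val v \<Longrightarrow> is_exp v"
| "is_exp t \<Longrightarrow> is_exp u \<Longrightarrow> is_exp (Let Pos x t u Pos)"
| "is_val v \<Longrightarrow> is_exp u \<Longrightarrow> is_exp (Let Neg x v u Pos)"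
| "is_val v \<Longrightarrow> is_exp t \<Longrightarrow> is_exp (DelPair v x y t Pos)"
| "is_val v \<Longrightarrow> is_exp t \<Longrightarrow> is_exp (DelUnit v t Pos)"
| "is_val v \<Longrightarrow> is_exp t \<Longrightarrow> is_exp u \<Longrightarrow> is_exp (DelSum v x t y u Pos)"
| "is_val v \<Longrightarrow> is_val w \<Longrightarrow> is_exp (App v w Pos)"
| "is_val v \<Longrightarrow> is_exp (Proj1 v Pos)"
| "is_val v \<Longrightarrow> is_exp (Proj2 v Pos)"

fun fv :: "tm \<Rightarrow> name set" where
  "fv (Var x) = {x}" | "fv New = {}" | "fv Delete = {}" | "fv Unit = {}" | "fv (Res n) = {}"
| "fv (Pair v w) = fv v \<union> fv w" | "fv (Inj1 v) = fv v" | "fv (Inj2 v) = fv v"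
| "fv (Lam x t) = fv t - {x}" | "fv (WPair t u) = fv t \<union> fv u"
| "fv (Let p x t u e) = fv t \<union> (fv u - {x})"
| "fv (DelPair v x y t e) = fv v \<union> (fv t - {x, y})"
| "fv (DelUnit v t e) = fv v \<union> fv t"
| "fv (DelSum v x t y u e) = fv v \<union> (fv t - {x}) \<union> (fv u - {y})"
| "fv (App v w e) = fv v \<union> fv w"
| "fv (Proj1 v e) = fv v" | "fv (Proj2 v e) = fv v"

definition sw :: "name \<Rightarrow> name \<Rightarrow> name \<Rightarrow> name" where
  "sw a b z = (if z = a then b else if z = b then a else z)"

fun swap :: "name \<Rightarrow> name \<Rightarrow> tm \<Rightarrow> tm" where
  "swap a b (Var x) = Var (sw a b x)" | "swap a b New = New" | "swap a b Delete = Delete"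
| "swap a b Unit = Unit" | "swap a b (Res n) = Res n"
| "swap a b (Pair v w) = Pair (swap a b v) (swap a b w)"
| "swap a b (Inj1 v) = Inj1 (swap a b v)" | "swap a b (Inj2 v) = Inj2 (swap a b v)"
| "swap a b (Lam x t) = Lam (sw a b x) (swap a b t)"
| "swap a b (WPair t u) = WPair (swap a b t) (swap a b u)"
| "swap a b (Let p x t u e) = Let p (sw a b x) (swap a b t) (swap a b u) e"
| "swap a b (DelPair v x y t e) = DelPair (swap a b v) (sw a b x) (sw a b y) (swap a b t) e"
| "swap a b (DelUnit v t e) = DelUnit (swap a b v) (swap a b t) e"
| "swap a b (DelSum v x t y u e) = DelSum (swap a b v) (sw a b x) (swap a b t) (sw a b y) (swap a b u) e"
| "swap a b (App v w e) = App (swap a b v) (swap a b w) e"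
| "swap a b (Proj1 v e) = Proj1 (swap a b v) e" | "swap a b (Proj2 v e) = Proj2 (swap a b v) e"

lemma size_swap[simp]: "size (swap a b t) = size t"
  by (induct t) auto

type_synonym sbst = "(name \<times> tm) list"

definition FVs :: "sbst \<Rightarrow> name set" where
  "FVs \<sigma> = (\<Union>p\<in>set \<sigma>. fv (snd p))"

definition rm :: "name set \<Rightarrow> sbst \<Rightarrow> sbst" where
  "rm X \<sigma> = filter (\<lambda>p. fst p \<notin> X) \<sigma>"

definition fresh :: "name set \<Rightarrow> name" where
  "fresh S = Suc (Max (insert 0 S))"

definition pick :: "name \<Rightarrow> name set \<Rightarrow> sbst \<Rightarrow> tm \<Rightarrow> name" where
  "pick x avoid \<sigma> t = (if x \<in> FVs \<sigma>
      then fresh (FVs \<sigma> \<union> fv t \<union> fst ` set \<sigma> \<union> {x} \<union> avoid) else x)"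

function (sequential) subst :: "sbst \<Rightarrow> tm \<Rightarrow> tm" where
  "subst \<sigma> (Var x) = (case map_of \<sigma> x of Some v \<Rightarrow> v | None \<Rightarrow> Var x)"
| "subst \<sigma> New = New" | "subst \<sigma> Delete = Delete" | "subst \<sigma> Unit = Unit"
| "subst \<sigma> (Res n) = Res n"
| "subst \<sigma> (Pair v w) = Pair (subst \<sigma> v) (subst \<sigma> w)"
| "subst \<sigma> (Inj1 v) = Inj1 (subst \<sigma> v)" | "subst \<sigma> (Inj2 v) = Inj2 (subst \<sigma> v)"
| "subst \<sigma> (Lam x t) =
     Lam (pick x {} (rm {x} \<sigma>) t) (subst (rm {x} \<sigma>) (swap x (pick x {} (rm {x} \<sigma>) t) t))"
| "subst \<sigma> (WPair t u) = WPair (subst \<sigma> t) (subst \<sigma> u)"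
| "subst \<sigma> (Let p x t u e) =
     Let p (pick x {} (rm {x} \<sigma>) u) (subst \<sigma> t)
       (subst (rm {x} \<sigma>) (swap x (pick x {} (rm {x} \<sigma>) u) u)) e"
| "subst \<sigma> (DelPair v x y t e) =
     DelPair (subst \<sigma> v) (pick x {x, y} (rm {x, y} \<sigma>) t)
       (pick y {x, y, pick x {x, y} (rm {x, y} \<sigma>) t} (rm {x, y} \<sigma>)
          (swap x (pick x {x, y} (rm {x, y} \<sigma>) t) t))
       (subst (rm {x, y} \<sigma>)
          (swap y (pick y {x, y, pick x {x, y} (rm {x, y} \<sigma>) t} (rm {x, y} \<sigma>)
                     (swap x (pick x {x, y} (rm {x, y} \<sigma>) t) t))
             (swap x (pick x {x, y} (rm {x, y} \<sigma>) t) t))) e"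
| "subst \<sigma> (DelUnit v t e) = DelUnit (subst \<sigma> v) (subst \<sigma> t) e"
| "subst \<sigma> (DelSum v x t y u e) =
     DelSum (subst \<sigma> v)
       (pick x {} (rm {x} \<sigma>) t) (subst (rm {x} \<sigma>) (swap x (pick x {} (rm {x} \<sigma>) t) t))
       (pick y {} (rm {y} \<sigma>) u) (subst (rm {y} \<sigma>) (swap y (pick y {} (rm {y} \<sigma>) u) u)) e"
| "subst \<sigma> (App v w e) = App (subst \<sigma> v) (subst \<sigma> w) e"
| "subst \<sigma> (Proj1 v e) = Proj1 (subst \<sigma> v) e"
| "subst \<sigma> (Proj2 v e) = Proj2 (subst \<sigma> v) e"
  by pat_completeness auto
termination by (relation "measure (\<lambda>(\<sigma>, t). size t)") auto

type_synonym ctx = "(name \<times> ty) list"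

text \<open>has_ty b \<Gamma> t A  is  \<Gamma> \<turnstile>_p t : A.  The flag b says whether the rule (struct)
 is available (b = True: the full calculus; b = False: the ordered fragment).
 Contexts are lists of typed variables with pairwise distinct names.\<close>

inductive has_ty :: "bool \<Rightarrow> ctx \<Rightarrow> tm \<Rightarrow> ty \<Rightarrow> bool" for b :: bool where
  t_var: "has_ty b [(x, A)] (Var x) A"
| t_struct: "b \<Longrightarrow> has_ty b \<Gamma> t A \<Longrightarrow> inj_on \<rho> (fst ` set \<Gamma>)
    \<Longrightarrow> mset \<Gamma>' = mset (map (\<lambda>(x, B). (\<rho> x, B)) \<Gamma>)
    \<Longrightarrow> has_ty b \<Gamma>' (subst (map (\<lambda>(x, B). (x, Var (\<rho> x))) \<Gamma>) t) A"
| t_new: "has_ty b [] New (Lolli One (Plus R One))"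
| t_delete: "has_ty b [] Delete (Lolli R One)"
| t_res: "has_ty b [] (Res n) R"
| t_let: "has_ty b \<Delta> t A \<Longrightarrow> has_ty b (\<Gamma> @ [(x, A)]) u B
    \<Longrightarrow> (pol_of A = Neg \<longrightarrow> is_val t) \<Longrightarrow> distinct (map fst (\<Gamma> @ \<Delta>))
    \<Longrightarrow> has_ty b (\<Gamma> @ \<Delta>) (Let (pol_of A) x t u (pol_of B)) B"
| t_pair: "has_ty b \<Gamma> v A \<Longrightarrow> has_ty b \<Delta> w B \<Longrightarrow> is_val v \<Longrightarrow> is_val w
    \<Longrightarrow> distinct (map fst (\<Gamma> @ \<Delta>))
    \<Longrightarrow> has_ty b (\<Gamma> @ \<Delta>) (Pair v w) (Tensor A B)"
| t_delpair: "has_ty b \<Delta> v (Tensor A B) \<Longrightarrow> has_ty b (\<Gamma> @ [(x, A), (y, B)] @ \<Gamma>') t C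
    \<Longrightarrow> is_val v \<Longrightarrow> distinct (map fst (\<Gamma> @ \<Delta> @ \<Gamma>'))
    \<Longrightarrow> has_ty b (\<Gamma> @ \<Delta> @ \<Gamma>') (DelPair v x y t (pol_of C)) C"
| t_unit: "has_ty b [] Unit One"
| t_delunit: "has_ty b \<Delta> v One \<Longrightarrow> has_ty b (\<Gamma> @ \<Gamma>') t A
    \<Longrightarrow> is_val v \<Longrightarrow> distinct (map fst (\<Gamma> @ \<Delta> @ \<Gamma>'))
    \<Longrightarrow> has_ty b (\<Gamma> @ \<Delta> @ \<Gamma>') (DelUnit v t (pol_of A)) A"
| t_inj1: "has_ty b \<Gamma> v A \<Longrightarrow> is_val v \<Longrightarrow> has_ty b \<Gamma> (Inj1 v) (Plus A B)"
| t_inj2: "has_ty b \<Gamma> v B \<Longrightarrow> is_val v \<Longrightarrow> has_ty b \<Gamma> (Inj2 v) (Plus A B)"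
| t_delsum: "has_ty b \<Delta> v (Plus A B) \<Longrightarrow> has_ty b (\<Gamma> @ [(x, A)] @ \<Gamma>') t C
    \<Longrightarrow> has_ty b (\<Gamma> @ [(y, B)] @ \<Gamma>') u C
    \<Longrightarrow> is_val v \<Longrightarrow> distinct (map fst (\<Gamma> @ \<Delta> @ \<Gamma>'))
    \<Longrightarrow> has_ty b (\<Gamma> @ \<Delta> @ \<Gamma>') (DelSum v x t y u (pol_of C)) C"
| t_lam: "has_ty b ((x, A) # \<Gamma>) t B \<Longrightarrow> has_ty b \<Gamma> (Lam x t) (Lolli A B)"
| t_app: "has_ty b \<Gamma> w A \<Longrightarrow> has_ty b \<Delta> v (Lolli A B) \<Longrightarrow> is_val v \<Longrightarrow> is_val w
    \<Longrightarrow> distinct (map fst (\<Gamma> @ \<Delta>))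
    \<Longrightarrow> has_ty b (\<Gamma> @ \<Delta>) (App v w (pol_of B)) B"
| t_with: "has_ty b \<Gamma> t A \<Longrightarrow> has_ty b \<Gamma> u B \<Longrightarrow> has_ty b \<Gamma> (WPair t u) (With A B)"
| t_proj1: "has_ty b \<Gamma> v (With A1 A2) \<Longrightarrow> is_val v \<Longrightarrow> has_ty b \<Gamma> (Proj1 v (pol_of A1)) A1"
| t_proj2: "has_ty b \<Gamma> v (With A1 A2) \<Longrightarrow> is_val v \<Longrightarrow> has_ty b \<Gamma> (Proj2 v (pol_of A2)) A2"

text \<open>Stacks: Star is the empty stack; SVal v e s is v^e . s; SPi1 e s is pi_1^e . s;
 SBind x u e s is (x^+.u)^e . s.  Lists of resources r_n are represented by
 the lists of their indices n.  Cmd t s l e is the command <t | s | l>^e.\<close>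

datatype stk = Star | SVal tm pol stk | SPi1 pol stk | SPi2 pol stk | SBind name tm pol stk

datatype cmd = Cmd tm stk "nat list" pol

inductive styp :: "bool \<Rightarrow> stk \<Rightarrow> ty \<Rightarrow> ty \<Rightarrow> bool" for b :: bool where
  s_star: "styp b Star A A"
| s_val: "styp b s B C \<Longrightarrow> e = pol_of B \<Longrightarrow> has_ty b [] v A \<Longrightarrow> is_val v
    \<Longrightarrow> styp b (SVal v e s) (Lolli A B) C"
| s_bind: "styp b s B C \<Longrightarrow> e = pol_of B \<Longrightarrow> has_ty b [(x, A)] t B \<Longrightarrow> pol_of A = Pos
    \<Longrightarrow> styp b (SBind x t e s) A C"
| s_pi1: "styp b s A1 C \<Longrightarrow> e = pol_of A1 \<Longrightarrow> styp b (SPi1 e s) (With A1 A2) C"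
| s_pi2: "styp b s A2 C \<Longrightarrow> e = pol_of A2 \<Longrightarrow> styp b (SPi2 e s) (With A1 A2) C"

definition cmd_typed :: "bool \<Rightarrow> cmd \<Rightarrow> ty \<Rightarrow> bool" where
  "cmd_typed b c A = (case c of Cmd t s l e \<Rightarrow>
      (\<exists>B. pol_of B = e \<and> has_ty b [] t B \<and> styp b s B A))"

fun wf_stk :: "stk \<Rightarrow> bool" where
  "wf_stk Star = True"
| "wf_stk (SVal v e s) = (is_val v \<and> wf_stk s)"
| "wf_stk (SPi1 e s) = wf_stk s"
| "wf_stk (SPi2 e s) = wf_stk s"
| "wf_stk (SBind x u e s) = (is_exp u \<and> wf_stk s)"

fun wf_cmd :: "cmd \<Rightarrow> bool" where
  "wf_cmd (Cmd t s l e) = (is_exp t \<and> wf_stk s)"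

fun is_final_val :: "tm \<Rightarrow> bool" where
  "is_final_val Unit = True" | "is_final_val (Pair v w) = True"
| "is_final_val (Inj1 v) = True" | "is_final_val (Inj2 v) = True"
| "is_final_val (Res n) = True" | "is_final_val (WPair t u) = True"
| "is_final_val (Lam x t) = True" | "is_final_val New = True" | "is_final_val Delete = True"
| "is_final_val _ = False"

definition final_cmd :: "cmd \<Rightarrow> bool" where
  "final_cmd c = (\<exists>v l e. c = Cmd v Star l e \<and> is_val v \<and> is_final_val v)"

inductive red :: "cmd \<Rightarrow> cmd \<Rightarrow> bool" where
  r_letn: "is_val v \<Longrightarrow> red (Cmd (Let Neg x v t e) s l e) (Cmd (subst [(x, v)] t) s l e)"
| r_letp: "red (Cmd (Let Pos x t u e) s l e) (Cmd t (SBind x u e s) l Pos)"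
| r_bind: "is_val v \<Longrightarrow> red (Cmd v (SBind x t e s) l Pos) (Cmd (subst [(x, v)] t) s l e)"
| r_app: "is_val v \<Longrightarrow> is_val w \<Longrightarrow> red (Cmd (App v w e) s l e) (Cmd v (SVal w e s) l Neg)"
| r_lam: "is_val v \<Longrightarrow> red (Cmd (Lam x t) (SVal v e s) l Neg) (Cmd (subst [(x, v)] t) s l e)"
| r_proj1: "is_val v \<Longrightarrow> red (Cmd (Proj1 v e) s l e) (Cmd v (SPi1 e s) l Neg)"
| r_proj2: "is_val v \<Longrightarrow> red (Cmd (Proj2 v e) s l e) (Cmd v (SPi2 e s) l Neg)"
| r_with1: "red (Cmd (WPair t1 t2) (SPi1 e s) l Neg) (Cmd t1 s l e)"
| r_with2: "red (Cmd (WPair t1 t2) (SPi2 e s) l Neg) (Cmd t2 s l e)"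
| r_delpair: "is_val v \<Longrightarrow> is_val w \<Longrightarrow>
    red (Cmd (DelPair (Pair v w) x y t e) s l e) (Cmd (subst [(x, v), (y, w)] t) s l e)"
| r_delunit: "red (Cmd (DelUnit Unit t e) s l e) (Cmd t s l e)"
| r_delsum1: "is_val v \<Longrightarrow> red (Cmd (DelSum (Inj1 v) x1 t1 x2 t2 e) s l e) (Cmd (subst [(x1, v)] t1) s l e)"
| r_delsum2: "is_val v \<Longrightarrow> red (Cmd (DelSum (Inj2 v) x1 t1 x2 t2 e) s l e) (Cmd (subst [(x2, v)] t2) s l e)"
| r_new1: "red (Cmd New (SVal Unit e s) (n # l) Neg) (Cmd (Inj1 (Res n)) s l Pos)"
| r_new2: "red (Cmd New (SVal Unit e s) [] Neg) (Cmd (Inj2 Unit) s [] Pos)"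
| r_delete: "red (Cmd Delete (SVal (Res n) e s) l Neg) (Cmd Unit s (n # l) Pos)"

end

theory Submission
  imports Defs
begin

text \<open>Closed typing derivations determine the head of a term: a closed term is never a variable,
 every elimination form carries the polarity of its type, and, since closed values of positive
 type are introduction forms, every positive elimination form is applied to a matching
 constructor.  Together with the stack typing this shows that each command that is not a final
 value on the empty stack matches the left-hand side of some rule.\<close>

lemma sw_same [simp]: "sw x x z = z"
  by (simp add: sw_def)

lemma swap_same [simp]: "swap x x t = t"
  by (induct t) auto

lemma subst_Nil [simp]: "subst [] t = t"
  by (induct t) (auto simp: rm_def pick_def FVs_def)

lemma red_not_final: "red c c' \<Longrightarrow> \<not> final_cmd c"
  by (induction rule: red.induct) (auto simp: final_cmd_def)

fun closed_head :: "tm \<Rightarrow> ty \<Rightarrow> bool" where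
  "closed_head (Var x) T = False"
| "closed_head New T = (T = Lolli One (Plus R One))"
| "closed_head Delete T = (T = Lolli R One)"
| "closed_head Unit T = (T = One)"
| "closed_head (Res n) T = (T = R)"
| "closed_head (Pair v w) T = ((\<exists>A B. T = Tensor A B) \<and> is_val v \<and> is_val w)"
| "closed_head (Inj1 v) T = ((\<exists>A B. T = Plus A B) \<and> is_val v)"
| "closed_head (Inj2 v) T = ((\<exists>A B. T = Plus A B) \<and> is_val v)"
| "closed_head (Lam x t) T = (\<exists>A B. T = Lolli A B)"
| "closed_head (WPair t u) T = (\<exists>A B. T = With A B)"
| "closed_head (Let p x t u e) T = (e = pol_of T \<and> (p = Neg \<longrightarrow> is_val t))"
| "closed_head (DelPair v x y t e) T =
    (e = pol_of T \<and> (\<exists>v1 v2. v = Pair v1 v2 \<and> is_val v1 \<and> is_val v2))"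
| "closed_head (DelUnit v t e) T = (e = pol_of T \<and> v = Unit)"
| "closed_head (DelSum v x t y u e) T =
    (e = pol_of T \<and> (\<exists>w. (v = Inj1 w \<or> v = Inj2 w) \<and> is_val w))"
| "closed_head (App v w e) T = (e = pol_of T \<and> is_val v \<and> is_val w)"
| "closed_head (Proj1 v e) T = (e = pol_of T \<and> is_val v)"
| "closed_head (Proj2 v e) T = (e = pol_of T \<and> is_val v)"

lemma closed_head_positive_value_final:
  assumes "closed_head v T" and "is_val v" and "pol_of T = Pos"
  shows "is_final_val v"
  using assms by (cases v) (auto elim: is_val.cases)

lemma has_ty_closed_head: "has_ty b [] t T \<Longrightarrow> closed_head t T"
proof (induction "[] :: ctx" t T rule: has_ty.induct)
  case (t_struct \<Gamma> t A \<rho>)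
  then have "\<Gamma> = []"
    by (metis Nil_is_map_conv mset_zero_iff_right)
  with t_struct show ?case
    by simp
next
  case (t_delpair \<Delta> v A B \<Gamma> x y t C \<Gamma>')
  then have "is_final_val v"
    by (auto intro: closed_head_positive_value_final)
  with t_delpair show ?case
    by (cases v) auto
next
  case (t_delunit \<Delta> v \<Gamma> \<Gamma>' t A)
  then have "is_final_val v"
    by (auto intro: closed_head_positive_value_final)
  with t_delunit show ?case
    by (cases v) auto
next
  case (t_delsum \<Delta> v A B \<Gamma> x \<Gamma>' t C y u)
  then have "is_final_val v"
    by (auto intro: closed_head_positive_value_final)
  with t_delsum show ?case
    by (cases v) auto
qed auto

lemma closed_value_One: "has_ty b [] v One \<Longrightarrow> is_val v \<Longrightarrow> v = Unit"
  using closed_head_positive_value_final[of v One] has_ty_closed_head[of b v One]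
  by (cases v) auto

lemma closed_value_R: "has_ty b [] v R \<Longrightarrow> is_val v \<Longrightarrow> \<exists>n. v = Res n"
  using closed_head_positive_value_final[of v R] has_ty_closed_head[of b v R]
  by (cases v) auto

lemma final_exp_is_val: "is_exp t \<Longrightarrow> is_final_val t \<Longrightarrow> is_val t"
  by (erule is_exp.cases) auto

lemma progress_final_value:
  assumes ht: "has_ty b [] t B" and st: "styp b s B A"
    and val: "is_val t" and fin: "is_final_val t" and nonempty: "s \<noteq> Star"
  shows "\<exists>c'. red (Cmd t s l (pol_of B)) c'"
proof -
  have head: "closed_head t B"
    using ht by (rule has_ty_closed_head)
  show ?thesis
  proof (cases s)
    case (SVal w e s')
    then obtain A' B' where B: "B = Lolli A' B'" and e: "e = pol_of B'"
      and hw: "has_ty b [] w A'" and vw: "is_val w"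
      using st by (auto elim: styp.cases)
    show ?thesis
    proof (cases t)
      case (Lam x u)
      then show ?thesis
        using SVal B e vw by (auto intro: red.intros)
    next
      case New
      with head B hw have "w = Unit"
        by (auto intro: closed_value_One[OF _ vw])
      with New SVal B show ?thesis
        by (cases l) (auto intro: red.intros)
    next
      case Delete
      with head B hw obtain n where "w = Res n"
        using closed_value_R[OF _ vw] by auto
      with Delete SVal B show ?thesis
        by (auto intro: red.intros)
    qed (use head B fin in auto)
  next
    case (SPi1 e s')
    then obtain A1 A2 where "B = With A1 A2" and "e = pol_of A1"
      using st by (auto elim: styp.cases)
    with head fin SPi1 show ?thesis
      by (cases t) (auto intro: red.intros)
  next
    case (SPi2 e s')
    then obtain A1 A2 where "B = With A1 A2" and "e = pol_of A2"
      using st by (auto elim: styp.cases)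
    with head fin SPi2 show ?thesis
      by (cases t) (auto intro: red.intros)
  next
    case (SBind x u e s')
    then have "pol_of B = Pos"
      using st by (auto elim: styp.cases)
    with SBind val show ?thesis
      by (auto intro: red.intros)
  qed (use nonempty in simp)
qed

lemma progress_redex:
  assumes "has_ty b [] t B" and "\<not> is_final_val t"
  shows "\<exists>c'. red (Cmd t s l (pol_of B)) c'"
proof -
  have "closed_head t B"
    using assms(1) by (rule has_ty_closed_head)
  with assms(2) show ?thesis
  proof (cases t)
    case (Let p x t1 u e)
    with \<open>closed_head t B\<close> show ?thesis
      by (cases p) (auto intro: red.intros)
  qed (auto intro: red.intros)
qed

lemma progress:
  assumes ht: "has_ty b [] t B" and st: "styp b s B A" and exp: "is_exp t"
    and not_final: "\<not> final_cmd (Cmd t s l (pol_of B))"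
  shows "\<exists>c'. red (Cmd t s l (pol_of B)) c'"
proof (cases "is_final_val t")
  case True
  with exp have "is_val t"
    by (rule final_exp_is_val)
  with True not_final have "s \<noteq> Star"
    by (auto simp: final_cmd_def)
  with ht st \<open>is_val t\<close> True show ?thesis
    by (rule progress_final_value)
next
  case False
  with ht show ?thesis
    by (rule progress_redex)
qed

theorem theorem3:
  fixes b :: bool and c :: cmd and A :: ty
  assumes "wf_cmd c" and "cmd_typed b c A"
  shows "(\<exists>c'. red c c') \<longleftrightarrow> \<not> final_cmd c"
proof
  show "\<exists>c'. red c c' \<Longrightarrow> \<not> final_cmd c"
    using red_not_final by blast
next
  assume "\<not> final_cmd c"
  moreover obtain t s l e where c: "c = Cmd t s l e"
    by (cases c)
  moreover from assms c obtain B
    where "pol_of B = e" and "has_ty b [] t B" and "styp b s B A" and "is_exp t"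
    by (auto simp: cmd_typed_def)
  ultimately show "\<exists>c'. red c c'"
    using progress by blast
qed

end
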